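(* Let $\pi:\Delta\to\mathbb F[\overline A,\overline B,\overline C]$ be the $\mathbb F$-algebra homomorphism sending $A\mapsto\overline A$, $B\mapsto\overline B$, $C\mapsto\overline C$. Then (i) $\langle A,B\rangle$ is the preimage under $\pi$ of the subalgebra $\mathbb F[\overline A,\overline B]$; (ii) $\langle B,C\rangle$ is the preimage of $\mathbb F[\overline B,\overline C]$; (iii) $\langle A,C\rangle$ is the preimage of $\mathbb F[\overline A,\overline C]$.
   Context: Let $\mathbb F$ be a field and fix a nonzero $q\in\mathbb F$ with $q^4\neq 1$. The universal Askey--Wilson algebra $\Delta$ is the associative $\mathbb F$-algebra with 1 with generators $A,B,C$ subject to the relations that each of $A+\frac{qBC-q^{-1}CB}{q^2-q^{-2}}$, $B+\frac{qCA-q^{-1}AC}{q^2-q^{-2}}$, $C+\frac{qAB-q^{-1}BA}{q^2-q^{-2}}$ is central. $\overline A,\overline B,\overline C$ are mutually commuting indeterminates, $\mathbb F[\overline A,\overline B]$ etc. denote the subalgebras of $\mathbb F[\overline A,\overline B,\overline C]$ generated by the indicated variables. For a subset $\mathcal S\subseteq\Delta$, $\langle\mathcal S\rangle$ denotes the $\mathbb F$-subalgebra of $\Delta$ generated by $\mathcal S$. *)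

theory Defs
  imports "HOL-Library.Poly_Mapping"
begin

datatype gen = GA | GB | GC

datatype word = Word "gen list"

instantiation word :: monoid_add
begin
definition zero_word :: word where "zero_word = Word []"
fun plus_word :: "word \<Rightarrow> word \<Rightarrow> word" where
  "plus_word (Word u) (Word v) = Word (u @ v)"
instance
proof
  fix a b c :: word
  show "a + b + c = a + (b + c)" by (cases a; cases b; cases c) simp
  show "0 + a = a" by (cases a) (simp add: zero_word_def)
  show "a + 0 = a" by (cases a) (simp add: zero_word_def)
qed
end

type_synonym 'a freealg = "word \<Rightarrow>\<^sub>0 'a"

definition fscal :: "'a::field \<Rightarrow> 'a freealg" where
  "fscal c = Poly_Mapping.single 0 c"

definition fgen :: "gen \<Rightarrow> 'a::field freealg" where
  "fgen g = Poly_Mapping.single (Word [g]) 1"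

abbreviation "xA \<equiv> fgen GA"
abbreviation "xB \<equiv> fgen GB"
abbreviation "xC \<equiv> fgen GC"

type_synonym 'a cpoly = "(gen \<Rightarrow>\<^sub>0 nat) \<Rightarrow>\<^sub>0 'a"

definition cscal :: "'a::field \<Rightarrow> 'a cpoly" where
  "cscal c = Poly_Mapping.single 0 c"

definition cvar :: "gen \<Rightarrow> 'a::field cpoly" where
  "cvar g = Poly_Mapping.single (Poly_Mapping.single g 1) 1"

inductive_set alg_gen :: "('a \<Rightarrow> 'b::ring_1) \<Rightarrow> 'b set \<Rightarrow> 'b set"
  for emb :: "'a \<Rightarrow> 'b" and S :: "'b set" where
  scal: "emb c \<in> alg_gen emb S"
| base: "s \<in> S \<Longrightarrow> s \<in> alg_gen emb S"
| add: "x \<in> alg_gen emb S \<Longrightarrow> y \<in> alg_gen emb S \<Longrightarrow> x + y \<in> alg_gen emb S"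
| mult: "x \<in> alg_gen emb S \<Longrightarrow> y \<in> alg_gen emb S \<Longrightarrow> x * y \<in> alg_gen emb S"

section \<open>The universal Askey-Wilson algebra Delta = F<A,B,C> / I\<close>

definition aw_alpha :: "'a::field \<Rightarrow> 'a freealg" where
  "aw_alpha q = xA + fscal (q / (q^2 - inverse q ^ 2)) * xB * xC
                   - fscal (inverse q / (q^2 - inverse q ^ 2)) * xC * xB"

definition aw_beta :: "'a::field \<Rightarrow> 'a freealg" where
  "aw_beta q = xB + fscal (q / (q^2 - inverse q ^ 2)) * xC * xA
                  - fscal (inverse q / (q^2 - inverse q ^ 2)) * xA * xC"

definition aw_gamma :: "'a::field \<Rightarrow> 'a freealg" where
  "aw_gamma q = xC + fscal (q / (q^2 - inverse q ^ 2)) * xA * xB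
                   - fscal (inverse q / (q^2 - inverse q ^ 2)) * xB * xA"

text \<open>Two-sided ideal generated by the commutators of the three distinguished
  elements with the generators; it expresses that they are central.\<close>

inductive_set aw_ideal :: "'a::field \<Rightarrow> 'a freealg set" for q :: 'a where
  rel: "z \<in> {aw_alpha q, aw_beta q, aw_gamma q} \<Longrightarrow> x \<in> {xA, xB, xC}
          \<Longrightarrow> z * x - x * z \<in> aw_ideal q"
| zero: "0 \<in> aw_ideal q"
| add: "u \<in> aw_ideal q \<Longrightarrow> v \<in> aw_ideal q \<Longrightarrow> u + v \<in> aw_ideal q"
| lmult: "u \<in> aw_ideal q \<Longrightarrow> f * u \<in> aw_ideal q"
| rmult: "u \<in> aw_ideal q \<Longrightarrow> u * f \<in> aw_ideal q"

text \<open>Elements of Delta are represented by elements of the free algebra (modulo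
  aw_ideal q).  The set of representatives of the subalgebra of Delta generated
  by the images of S, i.e. the preimage of that subalgebra under the quotient map.\<close>

definition aw_subalg :: "'a::field \<Rightarrow> 'a freealg set \<Rightarrow> 'a freealg set" where
  "aw_subalg q S = {f. \<exists>g \<in> alg_gen fscal S. f - g \<in> aw_ideal q}"

primrec word_exp :: "gen list \<Rightarrow> gen \<Rightarrow>\<^sub>0 nat" where
  "word_exp [] = 0"
| "word_exp (g # gs) = Poly_Mapping.single g 1 + word_exp gs"

fun word_mon :: "word \<Rightarrow> gen \<Rightarrow>\<^sub>0 nat" where
  "word_mon (Word ws) = word_exp ws"

text \<open>pi on the free algebra (it kills aw_ideal q, so it induces pi on Delta).\<close>

definition aw_pi :: "'a::field freealg \<Rightarrow> 'a cpoly" where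
  "aw_pi f = (\<Sum>w \<in> Poly_Mapping.keys f. Poly_Mapping.single (word_mon w) (Poly_Mapping.lookup f w))"

end

theory Submission
  imports Defs
begin

text \<open>The map \<open>aw_pi\<close> kills the defining ideal and maps \<open>\<langle>A, B\<rangle>\<close> onto the
  polynomials in \<open>A\<close> and \<open>B\<close>; its kernel on the free algebra is the ideal generated by the
  commutators of the generators.  So everything reduces to showing that this commutator ideal
  lies in (the preimage of) \<open>\<langle>a, b\<rangle>\<close> for each cyclic triple \<open>(a, b, c)\<close>.

  Write \<open>s = q/(q\<^sup>2 - q\<^sup>-\<^sup>2)\<close>, \<open>t = q\<^sup>-\<^sup>1/(q\<^sup>2 - q\<^sup>-\<^sup>2)\<close> and let
  \<open>\<Gamma> = c + s a b - t b a\<close> be the central element attached to \<open>c\<close>, so \<open>c = \<Gamma> - X\<close> with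
  \<open>X \<in> \<langle>a, b\<rangle>\<close>.  As \<open>\<Gamma>\<close> is central, the elements \<open>u\<close> with \<open>u \<Gamma>\<^sup>k \<in> \<langle>a, b\<rangle>\<close> for
  all \<open>k\<close> form a two-sided ideal.  Substituting \<open>c = \<Gamma> - X\<close> into the central element
  attached to \<open>a\<close> and commuting it with \<open>a\<close> gives \<open>[a, b] \<Gamma> \<equiv> [Y, a] / (s - t)\<close> for
  some \<open>Y \<in> \<langle>a, b\<rangle>\<close>; here \<open>s - t = 1/(q + q\<^sup>-\<^sup>1)\<close> is invertible because \<open>q\<^sup>4 \<noteq> 1\<close>.
  Induction on \<open>k\<close> puts \<open>[a, b]\<close> into that ideal, and with it \<open>[a, c] = [a, \<Gamma>] - [a, X]\<close>
  and \<open>[b, c]\<close>, since \<open>[a, X]\<close> and \<open>[b, X]\<close> are combinations of multiples of \<open>[a, b]\<close>.\<close>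

lemma poly_mapping_sum_single:
  fixes f :: "'k \<Rightarrow>\<^sub>0 'b::comm_monoid_add"
  shows "f = (\<Sum>k\<in>Poly_Mapping.keys f. Poly_Mapping.single k (Poly_Mapping.lookup f k))"
proof (rule poly_mapping_eqI)
  fix j
  have "finite I \<Longrightarrow> Poly_Mapping.lookup (\<Sum>k\<in>I. Poly_Mapping.single k (Poly_Mapping.lookup f k)) j
      = (if j \<in> I then Poly_Mapping.lookup f j else 0)" for I
    by (induction I rule: finite_induct) (auto simp: lookup_single lookup_add when_def)
  then show "Poly_Mapping.lookup f j =
      Poly_Mapping.lookup (\<Sum>k\<in>Poly_Mapping.keys f. Poly_Mapping.single k (Poly_Mapping.lookup f k)) j"
    by (simp add: in_keys_iff)
qed

lemma poly_mapping_induct_single [case_names zero single add]: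
  fixes f :: "'k \<Rightarrow>\<^sub>0 'b::comm_monoid_add"
  assumes "P 0" and "\<And>k c. P (Poly_Mapping.single k c)" and "\<And>x y. P x \<Longrightarrow> P y \<Longrightarrow> P (x + y)"
  shows "P f"
proof -
  have "finite I \<Longrightarrow> P (\<Sum>k\<in>I. Poly_Mapping.single k (Poly_Mapping.lookup f k))" for I
    by (induction I rule: finite_induct) (auto intro: assms)
  then show ?thesis
    by (subst poly_mapping_sum_single) simp
qed

section \<open>The free algebra\<close>

lemma fscal_diff: "fscal (c - d) = fscal c - fscal d"
  by (simp add: fscal_def single_diff)

lemma fscal_commute: "fscal c * x = x * fscal c"
proof (induction x rule: poly_mapping_induct_single)
  case (single k d)
  then show ?case
    by (simp add: fscal_def mult_single mult.commute)
qed (simp_all add: distrib_left distrib_right)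

lemma fscal_inverse_mult_cancel: "d \<noteq> 0 \<Longrightarrow> fscal (1 / d) * (fscal d * x) = x"
  by (simp add: mult.assoc[symmetric] fscal_def mult_single)

lemma fscal_left_commute: "x * (fscal c * y) = fscal c * (x * y)"
  by (metis fscal_commute mult.assoc)

lemma single_Word_Cons: "Poly_Mapping.single (Word (g # l)) c = fgen g * Poly_Mapping.single (Word l) c"
  by (simp add: fgen_def mult_single)

lemma single_eq_fscal_mult: "Poly_Mapping.single w c = fscal c * Poly_Mapping.single w 1"
  by (simp add: fscal_def mult_single)

lemma single_Word_Nil: "Poly_Mapping.single (Word []) (1::'a::field) = 1"
  by (metis single_one zero_word_def)

lemma freealg_induct [case_names fscal fgen add mult]:
  fixes f :: "'a::field freealg"
  assumes fscal: "\<And>c. P (fscal c)" and fgen: "\<And>g. P (fgen g)"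
    and add: "\<And>x y. P x \<Longrightarrow> P y \<Longrightarrow> P (x + y)"
    and mult: "\<And>x y. P x \<Longrightarrow> P y \<Longrightarrow> P (x * y)"
  shows "P f"
proof (induction f rule: poly_mapping_induct_single)
  case zero
  then show ?case
    using fscal[of 0] by (simp add: fscal_def)
next
  case (single k c)
  obtain l where k: "k = Word l"
    by (cases k)
  have "P (Poly_Mapping.single (Word l) (1::'a))"
    by (induction l) (use fscal[of 1] in \<open>simp_all add: single_Word_Nil fscal_def single_Word_Cons fgen mult\<close>)
  then show ?case
    by (simp add: k single_eq_fscal_mult[of _ c] fscal mult)
qed (rule add)

lemma zero_mem_alg_gen: "0 \<in> alg_gen fscal S"
  using alg_gen.scal[of fscal 0 S] by (simp add: fscal_def)

lemma minus_one_mem_alg_gen: "- 1 \<in> alg_gen fscal S"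
  using alg_gen.scal[of fscal "- 1" S] by (simp add: fscal_def single_uminus)

lemma alg_gen_diff: "x \<in> alg_gen fscal S \<Longrightarrow> y \<in> alg_gen fscal S \<Longrightarrow> x - y \<in> alg_gen fscal S"
  using alg_gen.add[OF _ alg_gen.mult[OF minus_one_mem_alg_gen]] by fastforce

lemma commutator_mem_ideal:
  fixes I :: "'a::field freealg set"
  assumes "0 \<in> I" and add: "\<And>u v. u \<in> I \<Longrightarrow> v \<in> I \<Longrightarrow> u + v \<in> I"
    and lmult: "\<And>u f. u \<in> I \<Longrightarrow> f * u \<in> I" and rmult: "\<And>u f. u \<in> I \<Longrightarrow> u * f \<in> I"
    and fgen: "\<And>g. z * fgen g - fgen g * z \<in> I"
  shows "z * y - y * z \<in> I"
proof (induction y rule: freealg_induct)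
  case (fscal c)
  then show ?case
    using \<open>0 \<in> I\<close> by (simp add: fscal_commute)
next
  case (add x y)
  have "z * (x + y) - (x + y) * z = (z * x - x * z) + (z * y - y * z)"
    by (simp add: algebra_simps)
  then show ?case
    using add.IH by (simp add: assms(2))
next
  case (mult x y)
  have "z * (x * y) - x * y * z = (z * x - x * z) * y + x * (z * y - y * z)"
    by (simp add: algebra_simps)
  then show ?case
    using mult.IH by (simp add: add lmult rmult)
qed (rule fgen)

lemma word_exp_append: "word_exp (xs @ ys) = word_exp xs + word_exp ys"
  by (induction xs) (simp_all add: add.assoc)

lemma word_mon_plus: "word_mon (u + v) = word_mon u + word_mon v"
  by (cases u; cases v) (simp add: word_exp_append)

lemma aw_pi_zero [simp]: "aw_pi 0 = 0"
  by (simp add: aw_pi_def)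

lemma aw_pi_single: "aw_pi (Poly_Mapping.single w c) = Poly_Mapping.single (word_mon w) c"
  by (cases "c = 0") (simp_all add: aw_pi_def)

lemma aw_pi_add: "aw_pi (f + g) = aw_pi f + aw_pi g"
  unfolding aw_pi_def by (rule setsum_keys_plus_distrib) (simp_all add: single_add)

lemma aw_pi_uminus: "aw_pi (- f) = - aw_pi f"
  using aw_pi_add[of "- f" f] by (simp add: eq_neg_iff_add_eq_0)

lemma aw_pi_diff: "aw_pi (f - g) = aw_pi f - aw_pi g"
  using aw_pi_add[of f "- g"] by (simp add: aw_pi_uminus)

lemma aw_pi_mult: "aw_pi (f * g) = aw_pi f * aw_pi g"
proof (induction f rule: poly_mapping_induct_single)
  case (single k c)
  show ?case
    by (induction g rule: poly_mapping_induct_single)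
      (simp_all add: mult_single aw_pi_single word_mon_plus distrib_left aw_pi_add)
qed (simp_all add: distrib_right aw_pi_add)

lemma aw_pi_fscal: "aw_pi (fscal c) = cscal c"
  by (simp add: fscal_def cscal_def aw_pi_single zero_word_def)

lemma aw_pi_fgen: "aw_pi (fgen g) = cvar g"
  by (simp add: fgen_def cvar_def aw_pi_single)

lemma aw_pi_mem_alg_gen: "x \<in> alg_gen fscal S \<Longrightarrow> aw_pi x \<in> alg_gen cscal (aw_pi ` S)"
proof (induction rule: alg_gen.induct)
  case (scal c)
  then show ?case
    by (simp add: aw_pi_fscal alg_gen.scal)
next
  case (base s)
  then show ?case
    by (simp add: alg_gen.base)
next
  case (add x y)
  then show ?case
    by (simp add: aw_pi_add alg_gen.add)
next
  case (mult x y)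
  then show ?case
    by (simp add: aw_pi_mult alg_gen.mult)
qed

lemma alg_gen_aw_pi_image_obtain:
  assumes "p \<in> alg_gen cscal (aw_pi ` S)"
  obtains x where "x \<in> alg_gen fscal S" and "aw_pi x = p"
  using assms
proof (induction arbitrary: thesis rule: alg_gen.induct)
  case (scal c)
  then show ?case
    using alg_gen.scal aw_pi_fscal by metis
next
  case (base s)
  then show ?case
    using alg_gen.base by blast
next
  case (add p p')
  then show ?case
    using alg_gen.add aw_pi_add by metis
next
  case (mult p p')
  then show ?case
    using alg_gen.mult aw_pi_mult by metis
qed

section \<open>The kernel of \<open>aw_pi\<close> is the commutator ideal\<close>

inductive_set ideal_span :: "'b::ring_1 set \<Rightarrow> 'b set \<Rightarrow> 'b set" for R S where
  base: "s \<in> S \<Longrightarrow> s \<in> ideal_span R S"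
| zero: "0 \<in> ideal_span R S"
| add: "u \<in> ideal_span R S \<Longrightarrow> v \<in> ideal_span R S \<Longrightarrow> u + v \<in> ideal_span R S"
| lmult: "u \<in> ideal_span R S \<Longrightarrow> r \<in> R \<Longrightarrow> r * u \<in> ideal_span R S"
| rmult: "u \<in> ideal_span R S \<Longrightarrow> r \<in> R \<Longrightarrow> u * r \<in> ideal_span R S"

lemma ideal_span_uminus:
  assumes "- 1 \<in> R" and "u \<in> ideal_span R S"
  shows "- u \<in> ideal_span R S"
  using ideal_span.lmult[OF assms(2,1)] by simp

definition comm_ideal :: "'a::field freealg set" where
  "comm_ideal = ideal_span UNIV {fgen g * fgen h - fgen h * fgen g | g h. True}"

lemma comm_ideal_add: "u \<in> comm_ideal \<Longrightarrow> v \<in> comm_ideal \<Longrightarrow> u + v \<in> comm_ideal"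
  and comm_ideal_lmult: "u \<in> comm_ideal \<Longrightarrow> f * u \<in> comm_ideal"
  and comm_ideal_rmult: "u \<in> comm_ideal \<Longrightarrow> u * f \<in> comm_ideal"
  and zero_mem_comm_ideal: "0 \<in> comm_ideal"
  by (simp_all add: comm_ideal_def ideal_span.intros)

lemma commutator_mem_comm_ideal: "x * y - y * x \<in> comm_ideal"
proof -
  note ideal = zero_mem_comm_ideal comm_ideal_add comm_ideal_lmult comm_ideal_rmult
  have "fgen g * y - y * fgen g \<in> comm_ideal" for g y
    by (rule commutator_mem_ideal[OF ideal]) (auto simp: comm_ideal_def intro: ideal_span.base)
  then have "(- 1) * (fgen g * x - x * fgen g) \<in> comm_ideal" for g
    by (rule comm_ideal_lmult)
  then have "x * fgen g - fgen g * x \<in> comm_ideal" for g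
    by simp
  then show ?thesis
    using commutator_mem_ideal[OF ideal] by blast
qed

definition normal_monomial :: "(gen \<Rightarrow>\<^sub>0 nat) \<Rightarrow> 'a::field freealg" where
  "normal_monomial m =
     xA ^ Poly_Mapping.lookup m GA * xB ^ Poly_Mapping.lookup m GB * xC ^ Poly_Mapping.lookup m GC"

lemma single_Word_sub_normal_monomial_mem_comm_ideal:
  "Poly_Mapping.single (Word l) (1::'a::field) - normal_monomial (word_exp l) \<in> comm_ideal"
proof (induction l)
  case Nil
  show ?case
    by (simp add: single_Word_Nil normal_monomial_def zero_mem_comm_ideal)
next
  case (Cons g l)
  define i j k where "i = Poly_Mapping.lookup (word_exp l) GA" and "j = Poly_Mapping.lookup (word_exp l) GB"
    and "k = Poly_Mapping.lookup (word_exp l) GC"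
  let ?W = "Poly_Mapping.single (Word l) (1::'a)"
  have IH: "?W - xA ^ i * xB ^ j * xC ^ k \<in> comm_ideal"
    using Cons.IH by (simp add: normal_monomial_def i_def j_def k_def)
  have "fgen g * ?W - normal_monomial (word_exp (g # l)) \<in> comm_ideal"
  proof (cases g)
    case GA
    have "A * W - A ^ Suc i * B * C = A * (W - A ^ i * B * C)" for A B C W :: "'a freealg"
      by (simp add: algebra_simps)
    then have "fgen g * ?W - normal_monomial (word_exp (g # l)) = xA * (?W - xA ^ i * xB ^ j * xC ^ k)"
      by (simp add: GA normal_monomial_def lookup_add lookup_single i_def j_def k_def)
    then show ?thesis
      by (metis comm_ideal_lmult IH)
  next
    case GB
    have "B * W - A ^ i * B ^ Suc j * C = B * (W - A ^ i * B ^ j * C) + (B * A ^ i - A ^ i * B) * (B ^ j * C)"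
      for A B C W :: "'a freealg"
      by (simp add: algebra_simps)
    then have "fgen g * ?W - normal_monomial (word_exp (g # l)) =
        xB * (?W - xA ^ i * xB ^ j * xC ^ k) + (xB * xA ^ i - xA ^ i * xB) * (xB ^ j * xC ^ k)"
      by (simp add: GB normal_monomial_def lookup_add lookup_single i_def j_def k_def)
    then show ?thesis
      by (metis comm_ideal_add comm_ideal_lmult comm_ideal_rmult commutator_mem_comm_ideal IH)
  next
    case GC
    have "C * W - A * C ^ Suc k = C * (W - A * C ^ k) + (C * A - A * C) * C ^ k"
      for A C W :: "'a freealg"
      by (simp add: algebra_simps)
    from this[of xC ?W "xA ^ i * xB ^ j"]
    have "fgen g * ?W - normal_monomial (word_exp (g # l)) =
        xC * (?W - xA ^ i * xB ^ j * xC ^ k) + (xC * (xA ^ i * xB ^ j) - xA ^ i * xB ^ j * xC) * xC ^ k"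
      by (simp add: GC normal_monomial_def lookup_add lookup_single i_def j_def k_def)
    then show ?thesis
      by (metis comm_ideal_add comm_ideal_lmult comm_ideal_rmult commutator_mem_comm_ideal IH)
  qed
  then show ?case
    by (simp add: single_Word_Cons)
qed

definition normal_form :: "'a::field cpoly \<Rightarrow> 'a freealg" where
  "normal_form p = (\<Sum>m\<in>Poly_Mapping.keys p. fscal (Poly_Mapping.lookup p m) * normal_monomial m)"

lemma normal_form_add: "normal_form (p + r) = normal_form p + normal_form r"
  unfolding normal_form_def
  by (rule setsum_keys_plus_distrib) (simp_all add: fscal_def single_add distrib_right)

lemma normal_form_single: "normal_form (Poly_Mapping.single m c) = fscal c * normal_monomial m"
  by (cases "c = 0") (simp_all add: normal_form_def fscal_def)

lemma sub_normal_form_aw_pi_mem_comm_ideal: "u - normal_form (aw_pi u) \<in> comm_ideal"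
proof (induction u rule: poly_mapping_induct_single)
  case zero
  then show ?case
    by (simp add: normal_form_def zero_mem_comm_ideal)
next
  case (single w c)
  obtain l where w: "w = Word l"
    by (cases w)
  have "Poly_Mapping.single w c = fscal c * Poly_Mapping.single (Word l) 1"
    unfolding w by (rule single_eq_fscal_mult)
  moreover have "normal_form (aw_pi (Poly_Mapping.single w c)) = fscal c * normal_monomial (word_exp l)"
    by (simp add: w aw_pi_single normal_form_single)
  ultimately have "Poly_Mapping.single w c - normal_form (aw_pi (Poly_Mapping.single w c)) =
      fscal c * (Poly_Mapping.single (Word l) 1 - normal_monomial (word_exp l))"
    by (simp add: right_diff_distrib)
  then show ?case
    by (simp add: single_Word_sub_normal_monomial_mem_comm_ideal comm_ideal_lmult)
next
  case (add x y)
  have "x + y - normal_form (aw_pi (x + y)) = (x - normal_form (aw_pi x)) + (y - normal_form (aw_pi y))"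
    by (simp add: aw_pi_add normal_form_add)
  then show ?case
    by (metis comm_ideal_add add.IH)
qed

lemma aw_pi_eq_0_imp_mem_comm_ideal: "aw_pi u = 0 \<Longrightarrow> u \<in> comm_ideal"
  using sub_normal_form_aw_pi_mem_comm_ideal[of u] by (simp add: normal_form_def)

lemma aw_ideal_uminus: "u \<in> aw_ideal q \<Longrightarrow> - u \<in> aw_ideal q"
  using aw_ideal.lmult[of u q "- 1"] by simp

lemma aw_ideal_diff: "u \<in> aw_ideal q \<Longrightarrow> v \<in> aw_ideal q \<Longrightarrow> u - v \<in> aw_ideal q"
  unfolding diff_conv_add_uminus by (intro aw_ideal.add aw_ideal_uminus)

lemma aw_pi_aw_ideal: "u \<in> aw_ideal q \<Longrightarrow> aw_pi u = 0"
  by (induction rule: aw_ideal.induct) (auto simp: aw_pi_diff aw_pi_mult aw_pi_add mult.commute)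

lemma aw_central_commute:
  assumes "z \<in> {aw_alpha q, aw_beta q, aw_gamma q}"
  shows "z * y - y * z \<in> aw_ideal q"
proof (rule commutator_mem_ideal[OF aw_ideal.zero aw_ideal.add aw_ideal.lmult aw_ideal.rmult])
  show "z * fgen g - fgen g * z \<in> aw_ideal q" for g
    by (rule aw_ideal.rel[OF assms]) (cases g; simp)
qed

lemma alg_gen_subset_aw_subalg: "x \<in> alg_gen fscal S \<Longrightarrow> x \<in> aw_subalg q S"
  by (auto simp: aw_subalg_def intro!: bexI[of _ x] aw_ideal.zero)

lemma aw_subalg_cong:
  assumes "x \<in> aw_subalg q S" and "y - x \<in> aw_ideal q"
  shows "y \<in> aw_subalg q S"
proof -
  obtain g where g: "g \<in> alg_gen fscal S" and "x - g \<in> aw_ideal q"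
    using assms(1) by (auto simp: aw_subalg_def)
  have "(y - x) + (x - g) \<in> aw_ideal q"
    by (rule aw_ideal.add) fact+
  then have "y - g \<in> aw_ideal q"
    by simp
  then show ?thesis
    using g by (auto simp: aw_subalg_def)
qed

lemma aw_ideal_subset_aw_subalg: "x \<in> aw_ideal q \<Longrightarrow> x \<in> aw_subalg q S"
  using aw_subalg_cong[OF alg_gen_subset_aw_subalg[OF zero_mem_alg_gen]] by simp

lemma aw_subalg_add: "x \<in> aw_subalg q S \<Longrightarrow> y \<in> aw_subalg q S \<Longrightarrow> x + y \<in> aw_subalg q S"
proof -
  assume "x \<in> aw_subalg q S" "y \<in> aw_subalg q S"
  then obtain g h where g: "g \<in> alg_gen fscal S" "x - g \<in> aw_ideal q"
    and h: "h \<in> alg_gen fscal S" "y - h \<in> aw_ideal q"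
    by (auto simp: aw_subalg_def)
  have "x + y - (g + h) = (x - g) + (y - h)"
    by simp
  then have "x + y - (g + h) \<in> aw_ideal q"
    by (metis aw_ideal.add g(2) h(2))
  then show ?thesis
    using g h by (auto simp: aw_subalg_def intro: alg_gen.add)
qed

lemma aw_subalg_mult: "x \<in> aw_subalg q S \<Longrightarrow> y \<in> aw_subalg q S \<Longrightarrow> x * y \<in> aw_subalg q S"
proof -
  assume "x \<in> aw_subalg q S" "y \<in> aw_subalg q S"
  then obtain g h where g: "g \<in> alg_gen fscal S" "x - g \<in> aw_ideal q"
    and h: "h \<in> alg_gen fscal S" "y - h \<in> aw_ideal q"
    by (auto simp: aw_subalg_def)
  have "x * y - g * h = (x - g) * y + g * (y - h)"
    by (simp add: algebra_simps)
  then have "x * y - g * h \<in> aw_ideal q"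
    using g h by (simp add: aw_ideal.add aw_ideal.lmult aw_ideal.rmult)
  then show ?thesis
    using g h by (auto simp: aw_subalg_def intro: alg_gen.mult)
qed

lemma aw_subalg_uminus: "x \<in> aw_subalg q S \<Longrightarrow> - x \<in> aw_subalg q S"
  using aw_subalg_mult[OF alg_gen_subset_aw_subalg[OF minus_one_mem_alg_gen]] by simp

lemma aw_subalg_diff: "x \<in> aw_subalg q S \<Longrightarrow> y \<in> aw_subalg q S \<Longrightarrow> x - y \<in> aw_subalg q S"
  unfolding diff_conv_add_uminus by (intro aw_subalg_add aw_subalg_uminus)

lemma aw_subalg_subset_preimage: "aw_subalg q S \<subseteq> {f. aw_pi f \<in> alg_gen cscal (aw_pi ` S)}"
proof
  fix f
  assume "f \<in> aw_subalg q S"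
  then obtain g where "g \<in> alg_gen fscal S" and "f - g \<in> aw_ideal q"
    by (auto simp: aw_subalg_def)
  then show "f \<in> {f. aw_pi f \<in> alg_gen cscal (aw_pi ` S)}"
    using aw_pi_aw_ideal aw_pi_mem_alg_gen by (fastforce simp: aw_pi_diff)
qed

lemma aw_subalg_eq_preimage:
  assumes "comm_ideal \<subseteq> aw_subalg q S"
  shows "aw_subalg q S = {f. aw_pi f \<in> alg_gen cscal (aw_pi ` S)}"
proof (rule equalityI[OF aw_subalg_subset_preimage], rule subsetI)
  fix f
  assume "f \<in> {f. aw_pi f \<in> alg_gen cscal (aw_pi ` S)}"
  then obtain g where g: "g \<in> alg_gen fscal S" and "aw_pi g = aw_pi f"
    by (auto elim: alg_gen_aw_pi_image_obtain)
  then have "f - g \<in> comm_ideal"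
    by (simp add: aw_pi_eq_0_imp_mem_comm_ideal aw_pi_diff)
  then have "f - g \<in> aw_subalg q S"
    using assms by blast
  then show "f \<in> aw_subalg q S"
    using aw_subalg_add[OF _ alg_gen_subset_aw_subalg[OF g]] by fastforce
qed

section \<open>The subalgebra generated by two of the generators\<close>

lemma aw_coeff_diff_nonzero:
  fixes q :: "'a::field"
  assumes "q \<noteq> 0" and "q ^ 4 \<noteq> 1"
  shows "q / (q^2 - inverse q ^ 2) - inverse q / (q^2 - inverse q ^ 2) \<noteq> 0"
proof -
  have "q ^ 4 - 1 = q^2 * (q^2 - inverse q ^ 2)" and "q ^ 4 - 1 = (q * (q - inverse q)) * (q^2 + 1)"
    using assms(1) by (simp_all add: field_simps power4_eq_xxxx power2_eq_square)
  then have "q^2 - inverse q ^ 2 \<noteq> 0" and "q - inverse q \<noteq> 0"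
    using assms(2) by auto
  then show ?thesis
    by (simp add: diff_divide_distrib[symmetric])
qed

definition aw_central_elt :: "'a::field \<Rightarrow> gen \<Rightarrow> gen \<Rightarrow> gen \<Rightarrow> 'a freealg" where
  "aw_central_elt q a b c = fgen c + fscal (q / (q^2 - inverse q ^ 2)) * fgen a * fgen b
                   - fscal (inverse q / (q^2 - inverse q ^ 2)) * fgen b * fgen a"

definition cyclic :: "gen \<Rightarrow> gen \<Rightarrow> gen \<Rightarrow> bool" where
  "cyclic a b c \<longleftrightarrow> (a, b, c) \<in> {(GA, GB, GC), (GB, GC, GA), (GC, GA, GB)}"

lemma cyclic_rotate: "cyclic a b c \<Longrightarrow> cyclic b c a"
  by (auto simp: cyclic_def)

lemma cyclic_exhaust: "cyclic a b c \<Longrightarrow> g = a \<or> g = b \<or> g = c"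
  by (cases g) (auto simp: cyclic_def)

lemma aw_central_elt_commute:
  assumes "cyclic a b c"
  shows "aw_central_elt q a b c * y - y * aw_central_elt q a b c \<in> aw_ideal q"
proof (rule aw_central_commute)
  show "aw_central_elt q a b c \<in> {aw_alpha q, aw_beta q, aw_gamma q}"
    using assms by (auto simp: cyclic_def aw_central_elt_def aw_alpha_def aw_beta_def aw_gamma_def)
qed

context
  fixes q :: "'a::field" and a b c :: gen
  assumes q_nonzero: "q \<noteq> 0" and q4: "q ^ 4 \<noteq> 1" and cyclic: "cyclic a b c"
begin

abbreviation "coeff \<equiv> q / (q^2 - inverse q ^ 2)"
abbreviation "coeff' \<equiv> inverse q / (q^2 - inverse q ^ 2)"
abbreviation "\<Gamma> \<equiv> aw_central_elt q a b c"
abbreviation "ab_alg \<equiv> alg_gen fscal {fgen a, fgen b}"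
abbreviation "ab_subalg \<equiv> aw_subalg q {fgen a, fgen b}"

text \<open>\<open>Y\<close> is what survives of the central element attached to \<open>a\<close> after substituting
  \<open>c = \<Gamma> - X\<close>, apart from the terms involving \<open>\<Gamma>\<close>.\<close>

abbreviation "X \<equiv> fscal coeff * fgen a * fgen b - fscal coeff' * fgen b * fgen a"
abbreviation "Y \<equiv> fgen a - fscal coeff * fgen b * X + fscal coeff' * X * fgen b"

lemma fgen_a_mem: "fgen a \<in> ab_alg"
  and fgen_b_mem: "fgen b \<in> ab_alg"
  by (simp_all add: alg_gen.base)

lemma X_mem: "X \<in> ab_alg"
  by (intro alg_gen_diff alg_gen.mult alg_gen.scal fgen_a_mem fgen_b_mem)

lemma Y_mem: "Y \<in> ab_alg"
  by (intro alg_gen.add alg_gen_diff alg_gen.mult alg_gen.scal fgen_a_mem fgen_b_mem X_mem)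

lemma fgen_c_eq: "fgen c = \<Gamma> - X"
  by (simp add: aw_central_elt_def algebra_simps)

lemma central_commute: "\<Gamma> * y - y * \<Gamma> \<in> aw_ideal q"
  using aw_central_elt_commute[OF cyclic] .

lemma central_power_commute: "\<Gamma> ^ k * y - y * \<Gamma> ^ k \<in> aw_ideal q"
proof (induction k)
  case 0
  then show ?case
    by (simp add: aw_ideal.zero)
next
  case (Suc k)
  have "\<Gamma> ^ Suc k * y - y * \<Gamma> ^ Suc k = \<Gamma> * (\<Gamma> ^ k * y - y * \<Gamma> ^ k) + (\<Gamma> * y - y * \<Gamma>) * \<Gamma> ^ k"
    by (simp add: algebra_simps)
  then show ?case
    using Suc central_commute aw_ideal.add aw_ideal.lmult aw_ideal.rmult by metis
qed

lemma mult_central_power_cong: "t * x * \<Gamma> ^ k - t * \<Gamma> ^ k * x \<in> aw_ideal q"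
proof -
  have "t * x * \<Gamma> ^ k - t * \<Gamma> ^ k * x = (- t) * (\<Gamma> ^ k * x - x * \<Gamma> ^ k)"
    by (simp add: algebra_simps)
  then show ?thesis
    using aw_ideal.lmult[OF central_power_commute] by metis
qed

lemma rotated_central_elt_eq:
  "aw_central_elt q b c a = fscal (coeff - coeff') * fgen b * \<Gamma> + Y + fscal coeff' * (fgen b * \<Gamma> - \<Gamma> * fgen b)"
proof -
  have "fgen a + fscal coeff * fgen b * (G - X') - fscal coeff' * (G - X') * fgen b =
     fscal (coeff - coeff') * fgen b * G + (fgen a - fscal coeff * fgen b * X' + fscal coeff' * X' * fgen b)
       + fscal coeff' * (fgen b * G - G * fgen b)" for G X' :: "'a freealg"
    by (simp add: algebra_simps fscal_diff)
  then show ?thesis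
    unfolding aw_central_elt_def[of q b c a] fgen_c_eq by simp
qed

lemma commutator_ab_mult_central_cong:
  "(fgen a * fgen b - fgen b * fgen a) * \<Gamma> - fscal (1 / (coeff - coeff')) * (Y * fgen a - fgen a * Y)
    \<in> aw_ideal q"
proof -
  let ?A = "fgen a" and ?B = "fgen b" and ?\<alpha> = "aw_central_elt q b c a"
  have "fscal (coeff - coeff') * ((?A * ?B - ?B * ?A) * G) - (Y' * ?A - ?A * Y') =
      - ((fscal (coeff - coeff') * ?B * G + Y' + fscal coeff' * (?B * G - G * ?B)) * ?A
         - ?A * (fscal (coeff - coeff') * ?B * G + Y' + fscal coeff' * (?B * G - G * ?B)))
      + fscal (coeff - coeff') * (?B * (G * ?A - ?A * G))
      + fscal coeff' * (- (G * ?B - ?B * G) * ?A - ?A * (- (G * ?B - ?B * G)))" for G Y' :: "'a freealg"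
    by (simp add: algebra_simps fscal_diff fscal_left_commute)
  then have "fscal (coeff - coeff') * ((?A * ?B - ?B * ?A) * \<Gamma>) - (Y * ?A - ?A * Y) =
      - (?\<alpha> * ?A - ?A * ?\<alpha>) + fscal (coeff - coeff') * (?B * (\<Gamma> * ?A - ?A * \<Gamma>))
      + fscal coeff' * (- (\<Gamma> * ?B - ?B * \<Gamma>) * ?A - ?A * (- (\<Gamma> * ?B - ?B * \<Gamma>)))"
    unfolding rotated_central_elt_eq .
  also have "\<dots> \<in> aw_ideal q"
    using aw_ideal.add[OF aw_ideal.add[OF aw_ideal_uminus aw_ideal.lmult[OF aw_ideal.lmult]]
      aw_ideal.lmult[OF aw_ideal_diff[OF aw_ideal.rmult aw_ideal.lmult]]]
      aw_central_elt_commute[OF cyclic_rotate[OF cyclic]] aw_ideal_uminus[OF central_commute]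
      central_commute
    by metis
  finally have "fscal (1 / (coeff - coeff')) *
      (fscal (coeff - coeff') * ((?A * ?B - ?B * ?A) * \<Gamma>) - (Y * ?A - ?A * Y)) \<in> aw_ideal q"
    by (rule aw_ideal.lmult)
  moreover have "fscal (1 / (coeff - coeff')) * (fscal (coeff - coeff') * Z - W) =
      Z - fscal (1 / (coeff - coeff')) * W" for Z W :: "'a freealg"
    by (simp only: right_diff_distrib fscal_inverse_mult_cancel[OF aw_coeff_diff_nonzero[OF q_nonzero q4]])
  ultimately show ?thesis
    by (simp only:)
qed

abbreviation "ab_ideal \<equiv> ideal_span ab_alg {fgen a * fgen b - fgen b * fgen a}"

lemma ab_ideal_subset_ab_alg: "u \<in> ab_ideal \<Longrightarrow> u \<in> ab_alg"
proof (induction rule: ideal_span.induct)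
  case zero
  then show ?case
    by (rule zero_mem_alg_gen)
qed (auto intro: alg_gen_diff alg_gen.mult alg_gen.add fgen_a_mem fgen_b_mem)

lemma commutator_a_mem_ab_ideal: "y \<in> ab_alg \<Longrightarrow> y * fgen a - fgen a * y \<in> ab_ideal"
proof (induction rule: alg_gen.induct)
  case (scal d)
  then show ?case
    by (simp add: fscal_commute ideal_span.zero)
next
  case (base s)
  have "- (fgen a * fgen b - fgen b * fgen a) \<in> ab_ideal"
    by (rule ideal_span_uminus[OF minus_one_mem_alg_gen ideal_span.base]) simp
  with base show ?case
    by (auto simp: ideal_span.zero)
next
  case (add x y)
  have "(x + y) * fgen a - fgen a * (x + y) = (x * fgen a - fgen a * x) + (y * fgen a - fgen a * y)"
    by (simp add: algebra_simps)
  then show ?case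
    using add.IH ideal_span.add by metis
next
  case (mult x y)
  have "x * y * fgen a - fgen a * (x * y) = x * (y * fgen a - fgen a * y) + (x * fgen a - fgen a * x) * y"
    by (simp add: algebra_simps)
  then show ?case
    using mult ideal_span.add ideal_span.lmult ideal_span.rmult by metis
qed

text \<open>The step \<open>k \<rightarrow> k + 1\<close> trades a factor \<open>\<Gamma>\<close> for the commutator \<open>[Y, a]\<close>, which
  lies in \<open>ab_ideal\<close> again.\<close>

lemma ab_ideal_mult_central_power: "u \<in> ab_ideal \<Longrightarrow> u * \<Gamma> ^ k \<in> ab_subalg"
proof (induction k arbitrary: u)
  case 0
  then show ?case
    by (simp add: alg_gen_subset_aw_subalg ab_ideal_subset_ab_alg)
next
  case (Suc k)
  from Suc.prems show ?case
  proof (induction rule: ideal_span.induct)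
    case (base s)
    let ?W = "fscal (1 / (coeff - coeff')) * (Y * fgen a - fgen a * Y)"
    have "?W \<in> ab_ideal"
      by (intro ideal_span.lmult commutator_a_mem_ab_ideal Y_mem alg_gen.scal)
    then have "?W * \<Gamma> ^ k \<in> ab_subalg"
      by (rule Suc.IH)
    moreover have "s * \<Gamma> ^ Suc k - ?W * \<Gamma> ^ k = (s * \<Gamma> - ?W) * \<Gamma> ^ k"
      by (simp add: algebra_simps)
    then have "s * \<Gamma> ^ Suc k - ?W * \<Gamma> ^ k \<in> aw_ideal q"
      using base aw_ideal.rmult[OF commutator_ab_mult_central_cong] by simp
    ultimately show ?case
      by (rule aw_subalg_cong)
  next
    case zero
    then show ?case
      using aw_ideal_subset_aw_subalg[OF aw_ideal.zero] by simp
  next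
    case (add u v)
    then show ?case
      by (simp add: distrib_right aw_subalg_add)
  next
    case (lmult u r)
    then show ?case
      by (simp add: mult.assoc aw_subalg_mult alg_gen_subset_aw_subalg)
  next
    case (rmult u r)
    then have "u * \<Gamma> ^ Suc k * r \<in> ab_subalg"
      by (simp add: aw_subalg_mult alg_gen_subset_aw_subalg)
    then show ?case
      using mult_central_power_cong aw_subalg_cong by blast
  qed
qed

abbreviation "power_stable \<equiv> {t. \<forall>k. t * \<Gamma> ^ k \<in> ab_subalg}"

lemma aw_ideal_subset_power_stable: "x \<in> aw_ideal q \<Longrightarrow> x \<in> power_stable"
  by (auto intro: aw_ideal_subset_aw_subalg aw_ideal.rmult)

lemma power_stable_add: "x \<in> power_stable \<Longrightarrow> y \<in> power_stable \<Longrightarrow> x + y \<in> power_stable"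
  by (auto simp: distrib_right intro: aw_subalg_add)

lemma power_stable_diff: "x \<in> power_stable \<Longrightarrow> y \<in> power_stable \<Longrightarrow> x - y \<in> power_stable"
  by (auto simp: left_diff_distrib intro: aw_subalg_diff)

lemma power_stable_alg_lmult: "t \<in> power_stable \<Longrightarrow> x \<in> ab_alg \<Longrightarrow> x * t \<in> power_stable"
  by (auto simp: mult.assoc intro: aw_subalg_mult alg_gen_subset_aw_subalg)

lemma power_stable_alg_rmult: "t \<in> power_stable \<Longrightarrow> x \<in> ab_alg \<Longrightarrow> t * x \<in> power_stable"
  using mult_central_power_cong aw_subalg_cong aw_subalg_mult alg_gen_subset_aw_subalg by blast

lemma power_stable_fgen_c_lmult:
  assumes "t \<in> power_stable"
  shows "fgen c * t \<in> power_stable"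
proof (intro CollectI allI)
  fix k
  have "\<Gamma> * t * \<Gamma> ^ k - t * \<Gamma> ^ Suc k = (\<Gamma> * t - t * \<Gamma>) * \<Gamma> ^ k"
    by (simp add: algebra_simps)
  then have "\<Gamma> * t * \<Gamma> ^ k - t * \<Gamma> ^ Suc k \<in> aw_ideal q"
    by (simp add: aw_ideal.rmult central_commute)
  moreover have "t * \<Gamma> ^ Suc k \<in> ab_subalg"
    using assms by blast
  ultimately have "\<Gamma> * t * \<Gamma> ^ k \<in> ab_subalg"
    using aw_subalg_cong by blast
  moreover have "X * t * \<Gamma> ^ k \<in> ab_subalg"
    using power_stable_alg_lmult[OF assms X_mem] by simp
  ultimately show "fgen c * t * \<Gamma> ^ k \<in> ab_subalg"
    unfolding fgen_c_eq left_diff_distrib by (rule aw_subalg_diff)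
qed

lemma power_stable_fgen_c_rmult:
  assumes "t \<in> power_stable"
  shows "t * fgen c \<in> power_stable"
proof (intro CollectI allI)
  fix k
  have "t * \<Gamma> * \<Gamma> ^ k \<in> ab_subalg"
    using assms by (simp add: mult.assoc flip: power_Suc)
  moreover have "t * X * \<Gamma> ^ k \<in> ab_subalg"
    using power_stable_alg_rmult[OF assms X_mem] by simp
  ultimately show "t * fgen c * \<Gamma> ^ k \<in> ab_subalg"
    unfolding fgen_c_eq right_diff_distrib left_diff_distrib by (rule aw_subalg_diff)
qed

lemma power_stable_lmult: "t \<in> power_stable \<Longrightarrow> f * t \<in> power_stable"
proof (induction f arbitrary: t rule: freealg_induct)
  case (fscal d)
  then show ?case
    by (rule power_stable_alg_lmult[OF _ alg_gen.scal])
next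
  case (fgen g)
  then show ?case
    using cyclic_exhaust[OF cyclic, of g] power_stable_alg_lmult fgen_a_mem fgen_b_mem power_stable_fgen_c_lmult
    by blast
next
  case (add x y)
  then show ?case
    using power_stable_add[OF add.IH] by (simp add: distrib_right)
next
  case (mult x y)
  show ?case
    using mult.IH(1)[OF mult.IH(2)[OF mult.prems]] by (simp add: mult.assoc)
qed

lemma power_stable_rmult: "t \<in> power_stable \<Longrightarrow> t * f \<in> power_stable"
proof (induction f arbitrary: t rule: freealg_induct)
  case (fscal d)
  then show ?case
    by (rule power_stable_alg_rmult[OF _ alg_gen.scal])
next
  case (fgen g)
  then show ?case
    using cyclic_exhaust[OF cyclic, of g] power_stable_alg_rmult fgen_a_mem fgen_b_mem power_stable_fgen_c_rmult
    by blast
next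
  case (add x y)
  then show ?case
    using power_stable_add[OF add.IH] by (simp add: distrib_left)
next
  case (mult x y)
  show ?case
    using mult.IH(2)[OF mult.IH(1)[OF mult.prems]] by (simp add: mult.assoc)
qed

lemma generator_commutator_power_stable: "fgen g * fgen h - fgen h * fgen g \<in> power_stable"
proof -
  let ?A = "fgen a" and ?B = "fgen b" and ?C = "fgen c"
  let ?K = "?A * ?B - ?B * ?A"
  have ab: "?K \<in> power_stable"
    using ab_ideal_mult_central_power[OF ideal_span.base] by simp
  have swap: "y * x - x * y \<in> power_stable" if "x * y - y * x \<in> power_stable" for x y :: "'a freealg"
    using power_stable_diff[OF aw_ideal_subset_power_stable[OF aw_ideal.zero] that] by simp
  have "?A * ?C - ?C * ?A = - (\<Gamma> * ?A - ?A * \<Gamma>) - (fscal coeff * (?A * ?K) - fscal coeff' * (?K * ?A))"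
    unfolding fgen_c_eq by (simp add: algebra_simps fscal_left_commute)
  moreover have "fscal coeff * (?A * ?K) - fscal coeff' * (?K * ?A) \<in> power_stable"
    by (intro power_stable_diff power_stable_lmult power_stable_rmult ab)
  ultimately have ac: "?A * ?C - ?C * ?A \<in> power_stable"
    using power_stable_diff[OF aw_ideal_subset_power_stable[OF aw_ideal_uminus[OF central_commute]]] by simp
  have "?B * ?C - ?C * ?B = - (\<Gamma> * ?B - ?B * \<Gamma>) - (fscal coeff' * (?B * ?K) - fscal coeff * (?K * ?B))"
    unfolding fgen_c_eq by (simp add: algebra_simps fscal_left_commute)
  moreover have "fscal coeff' * (?B * ?K) - fscal coeff * (?K * ?B) \<in> power_stable"
    by (intro power_stable_diff power_stable_lmult power_stable_rmult ab)
  ultimately have bc: "?B * ?C - ?C * ?B \<in> power_stable"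
    using power_stable_diff[OF aw_ideal_subset_power_stable[OF aw_ideal_uminus[OF central_commute]]] by simp
  have refl: "x * x - x * x \<in> power_stable" for x :: "'a freealg"
    using aw_ideal_subset_power_stable[OF aw_ideal.zero] by simp
  from cyclic_exhaust[OF cyclic, of g] cyclic_exhaust[OF cyclic, of h] show ?thesis
    using ab ac bc swap[OF ab] swap[OF ac] swap[OF bc] refl by blast
qed

lemma comm_ideal_subset_ab_subalg: "comm_ideal \<subseteq> ab_subalg"
proof
  fix u :: "'a freealg"
  assume "u \<in> comm_ideal"
  then have "u \<in> power_stable"
    unfolding comm_ideal_def
  proof (induction rule: ideal_span.induct)
    case (base s)
    then show ?case
      using generator_commutator_power_stable by blast
  next
    case zero
    then show ?case
      by (rule aw_ideal_subset_power_stable[OF aw_ideal.zero])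
  qed (simp_all only: power_stable_add power_stable_lmult power_stable_rmult)
  then have "u * \<Gamma> ^ 0 \<in> ab_subalg"
    by blast
  then show "u \<in> ab_subalg"
    by simp
qed

end

lemma aw_subalg_two_generators_eq_preimage:
  fixes q :: "'a::field"
  assumes "q \<noteq> 0" and "q ^ 4 \<noteq> 1" and "cyclic a b c"
  shows "aw_subalg q {fgen a, fgen b} = {f. aw_pi f \<in> alg_gen cscal {cvar a, cvar b}}"
  using aw_subalg_eq_preimage[OF comm_ideal_subset_ab_subalg[OF assms]] by (simp add: aw_pi_fgen)

theorem proposition11p14:
  fixes q :: "'a::field"
  assumes "q \<noteq> 0" and "q ^ 4 \<noteq> 1"
  shows "aw_subalg q {xA, xB} = {f. aw_pi f \<in> alg_gen cscal {cvar GA, cvar GB}} \<and>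
         aw_subalg q {xB, xC} = {f. aw_pi f \<in> alg_gen cscal {cvar GB, cvar GC}} \<and>
         aw_subalg q {xA, xC} = {f. aw_pi f \<in> alg_gen cscal {cvar GA, cvar GC}}"
proof (intro conjI)
  show "aw_subalg q {xA, xB} = {f. aw_pi f \<in> alg_gen cscal {cvar GA, cvar GB}}"
    by (rule aw_subalg_two_generators_eq_preimage[OF assms]) (simp add: cyclic_def)
  show "aw_subalg q {xB, xC} = {f. aw_pi f \<in> alg_gen cscal {cvar GB, cvar GC}}"
    by (rule aw_subalg_two_generators_eq_preimage[OF assms]) (simp add: cyclic_def)
  have "aw_subalg q {xC, xA} = {f. aw_pi f \<in> alg_gen cscal {cvar GC, cvar GA}}"
    by (rule aw_subalg_two_generators_eq_preimage[OF assms]) (simp add: cyclic_def)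
  then show "aw_subalg q {xA, xC} = {f. aw_pi f \<in> alg_gen cscal {cvar GA, cvar GC}}"
    by (simp add: insert_commute)
qed

end
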